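(* Let $R$ be a commutative Noetherian ring of prime characteristic $p$, let $H$ be a left $R[x,f]$-module, set $G:=H/\Gamma_x(H)$, and let $\widetilde{H}=\bigoplus_{n\in\mathbb{N}_0}H_n$ (with each $H_n=H$) be the graded left $R[x,f]$-module in which $x$ maps $h\in H_n$ to $xh\in H_{n+1}$. Then: (i) $\mathcal{G}(\widetilde{H})=\mathcal{G}(H)$; (ii) $\operatorname{HSL}(\widetilde{H})=\operatorname{HSL}(H)$ and $\Gamma_x(\widetilde{H})=\bigoplus_{n\in\mathbb{N}_0}\Gamma_x(H_n)=\widetilde{\Gamma_x(H)}$; (iii) there is an $R[x,f]$-isomorphism $\widetilde{H}/\Gamma_x(\widetilde{H})\cong\bigoplus_{n\in\mathbb{N}_0}H_n/\Gamma_x(H_n)=\widetilde{G}$.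
   Context: $R[x,f]$ denotes the Frobenius skew polynomial ring over $R$: as a left $R$-module it is free on $(x^i)_{i\in\mathbb{N}_0}$, with multiplication subject to $xr = r^px$; it is graded with $n$th component $Rx^n$. For a left $R[x,f]$-module $M$: $\operatorname{grann}_{R[x,f]}M$ is the largest graded two-sided ideal annihilating $M$; $\mathcal{G}(M)$ is the set of graded annihilators of all $R[x,f]$-submodules of $M$; $\Gamma_x(M)=\{m: x^jm=0\text{ for some }j\in\mathbb{N}\}$; $\operatorname{HSL}(M)$ is the least $e\in\mathbb{N}_0$ with $x^e\Gamma_x(M)=0$ ($\infty$ if none exists). For a left $R[x,f]$-module $N$, $\widetilde{N}$ denotes the analogous graded module $\bigoplus_{n\in\mathbb{N}_0}N$. *)

theory Defs
  imports Main "HOL-Library.Extended_Nat" "HOL-Computational_Algebra.Primes"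
begin

definition is_ideal :: "'r::comm_ring_1 set \<Rightarrow> bool" where
  "is_ideal I \<longleftrightarrow> 0 \<in> I \<and> (\<forall>a\<in>I. \<forall>b\<in>I. a + b \<in> I) \<and> (\<forall>r. \<forall>a\<in>I. r * a \<in> I)"

definition noetherian_ring :: "'r::comm_ring_1 itself \<Rightarrow> bool" where
  "noetherian_ring T \<longleftrightarrow>
     (\<forall>I :: nat \<Rightarrow> 'r set. (\<forall>n. is_ideal (I n)) \<and> (\<forall>n. I n \<subseteq> I (Suc n))
        \<longrightarrow> (\<exists>N. \<forall>n\<ge>N. I n = I N))"

text \<open>A left R[x,f]-module is an R-module M together with the additive action of x
  satisfying x (r m) = r^p (x m).  We represent it explicitly by a carrier set and operations.\<close>

record ('r, 'm) fmod =
  mcarrier :: "'m set"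
  madd :: "'m \<Rightarrow> 'm \<Rightarrow> 'm"
  mzero :: 'm
  mneg :: "'m \<Rightarrow> 'm"
  msmul :: "'r \<Rightarrow> 'm \<Rightarrow> 'm"
  mx :: "'m \<Rightarrow> 'm"

definition fmodule :: "nat \<Rightarrow> ('r::comm_ring_1, 'm, 'z) fmod_scheme \<Rightarrow> bool" where
  "fmodule p M \<longleftrightarrow>
     mzero M \<in> mcarrier M \<and>
     (\<forall>a\<in>mcarrier M. \<forall>b\<in>mcarrier M. madd M a b \<in> mcarrier M) \<and>
     (\<forall>a\<in>mcarrier M. mneg M a \<in> mcarrier M) \<and>
     (\<forall>r. \<forall>a\<in>mcarrier M. msmul M r a \<in> mcarrier M) \<and>
     (\<forall>a\<in>mcarrier M. mx M a \<in> mcarrier M) \<and>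
     (\<forall>a\<in>mcarrier M. \<forall>b\<in>mcarrier M. \<forall>c\<in>mcarrier M.
        madd M (madd M a b) c = madd M a (madd M b c)) \<and>
     (\<forall>a\<in>mcarrier M. \<forall>b\<in>mcarrier M. madd M a b = madd M b a) \<and>
     (\<forall>a\<in>mcarrier M. madd M (mzero M) a = a) \<and>
     (\<forall>a\<in>mcarrier M. madd M (mneg M a) a = mzero M) \<and>
     (\<forall>r. \<forall>a\<in>mcarrier M. \<forall>b\<in>mcarrier M. msmul M r (madd M a b) = madd M (msmul M r a) (msmul M r b)) \<and>
     (\<forall>r s. \<forall>a\<in>mcarrier M. msmul M (r + s) a = madd M (msmul M r a) (msmul M s a)) \<and>
     (\<forall>r s. \<forall>a\<in>mcarrier M. msmul M (r * s) a = msmul M r (msmul M s a)) \<and>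
     (\<forall>a\<in>mcarrier M. msmul M 1 a = a) \<and>
     (\<forall>a\<in>mcarrier M. \<forall>b\<in>mcarrier M. mx M (madd M a b) = madd M (mx M a) (mx M b)) \<and>
     (\<forall>r. \<forall>a\<in>mcarrier M. mx M (msmul M r a) = msmul M (r ^ p) (mx M a))"

definition fsubmodule :: "('r, 'm, 'z) fmod_scheme \<Rightarrow> 'm set \<Rightarrow> bool" where
  "fsubmodule M N \<longleftrightarrow> N \<subseteq> mcarrier M \<and> mzero M \<in> N \<and>
     (\<forall>a\<in>N. \<forall>b\<in>N. madd M a b \<in> N) \<and> (\<forall>a\<in>N. mneg M a \<in> N) \<and>
     (\<forall>r. \<forall>a\<in>N. msmul M r a \<in> N) \<and> (\<forall>a\<in>N. mx M a \<in> N)"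

text \<open>A graded two-sided ideal of R[x,f] is \<Oplus>_n I_n x^n, represented by the sequence (I_n):
  each I_n is an ideal of R, and closure under left and right multiplication by x
  means a^p \<in> I_(n+1) and a \<in> I_(n+1) for a \<in> I_n (right multiplication by r \<in> R
  is automatic since a x^n r = a r^(p^n) x^n).\<close>
definition graded_two_sided_ideal :: "nat \<Rightarrow> (nat \<Rightarrow> 'r::comm_ring_1 set) \<Rightarrow> bool" where
  "graded_two_sided_ideal p I \<longleftrightarrow> (\<forall>n. is_ideal (I n)) \<and>
     (\<forall>n. \<forall>a\<in>I n. a ^ p \<in> I (Suc n) \<and> a \<in> I (Suc n))"

text \<open>The homogeneous element a x^n acts on m as a (x^n m).\<close>
definition annihilates :: "('r::comm_ring_1, 'm, 'z) fmod_scheme \<Rightarrow> (nat \<Rightarrow> 'r set) \<Rightarrow> bool" where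
  "annihilates M I \<longleftrightarrow>
     (\<forall>n. \<forall>a\<in>I n. \<forall>m\<in>mcarrier M. msmul M a ((mx M ^^ n) m) = mzero M)"

definition grann :: "nat \<Rightarrow> ('r::comm_ring_1, 'm, 'z) fmod_scheme \<Rightarrow> nat \<Rightarrow> 'r set" where
  "grann p M = (GREATEST I. graded_two_sided_ideal p I \<and> annihilates M I)"

definition gann_set :: "nat \<Rightarrow> ('r::comm_ring_1, 'm, 'z) fmod_scheme \<Rightarrow> (nat \<Rightarrow> 'r set) set" where
  "gann_set p M = {grann p (M\<lparr>mcarrier := N\<rparr>) | N. fsubmodule M N}"

definition Gamma_x :: "('r, 'm, 'z) fmod_scheme \<Rightarrow> 'm set" where
  "Gamma_x M = {m \<in> mcarrier M. \<exists>j. (mx M ^^ j) m = mzero M}"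

definition HSL :: "('r, 'm, 'z) fmod_scheme \<Rightarrow> enat" where
  "HSL M = (if \<exists>e. \<forall>m\<in>Gamma_x M. (mx M ^^ e) m = mzero M
            then enat (LEAST e. \<forall>m\<in>Gamma_x M. (mx M ^^ e) m = mzero M) else \<infinity>)"

definition tilde :: "('r, 'm, 'z) fmod_scheme \<Rightarrow> ('r, nat \<Rightarrow> 'm) fmod" where
  "tilde M = \<lparr> mcarrier = {h. (\<forall>n. h n \<in> mcarrier M) \<and> finite {n. h n \<noteq> mzero M}},
               madd = (\<lambda>h g n. madd M (h n) (g n)),
               mzero = (\<lambda>n. mzero M),
               mneg = (\<lambda>h n. mneg M (h n)),
               msmul = (\<lambda>r h n. msmul M r (h n)),
               mx = (\<lambda>h n. case n of 0 \<Rightarrow> mzero M | Suc k \<Rightarrow> mx M (h k)) \<rparr>"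

definition coset :: "('r, 'm, 'z) fmod_scheme \<Rightarrow> 'm set \<Rightarrow> 'm \<Rightarrow> 'm set" where
  "coset M N a = {madd M a n | n. n \<in> N}"

definition quot :: "('r, 'm, 'z) fmod_scheme \<Rightarrow> 'm set \<Rightarrow> ('r, 'm set) fmod" where
  "quot M N = \<lparr> mcarrier = coset M N ` mcarrier M,
               madd = (\<lambda>A B. {madd M a b | a b. a \<in> A \<and> b \<in> B}),
               mzero = N,
               mneg = (\<lambda>A. mneg M ` A),
               msmul = (\<lambda>r A. \<Union>a\<in>A. coset M N (msmul M r a)),
               mx = (\<lambda>A. \<Union>a\<in>A. coset M N (mx M a)) \<rparr>"

definition fmod_iso :: "('r, 'a, 'z1) fmod_scheme \<Rightarrow> ('r, 'b, 'z2) fmod_scheme \<Rightarrow> ('a \<Rightarrow> 'b) \<Rightarrow> bool" where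
  "fmod_iso M N \<phi> \<longleftrightarrow> bij_betw \<phi> (mcarrier M) (mcarrier N) \<and>
     (\<forall>a\<in>mcarrier M. \<forall>b\<in>mcarrier M. \<phi> (madd M a b) = madd N (\<phi> a) (\<phi> b)) \<and>
     (\<forall>r. \<forall>a\<in>mcarrier M. \<phi> (msmul M r a) = msmul N r (\<phi> a)) \<and>
     (\<forall>a\<in>mcarrier M. \<phi> (mx M a) = mx N (\<phi> a))"

end

theory Submission
  imports Defs
begin

text \<open>
  On \<open>tilde M\<close> the power \<open>x\<^sup>e\<close> acts componentwise with a shift of degree by \<open>e\<close>,
  so everything is read off from the components. A homogeneous element \<open>a x\<^sup>n\<close>
  annihilates a set of sequences iff it annihilates all their components; a sequence is
  \<open>x\<close>-torsion iff its finitely many nonzero components are, a common exponent serving for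
  all of them; and cosets modulo \<open>tilde N\<close> are sequences of cosets modulo \<open>N\<close>, for any
  submodule \<open>N\<close>. For the graded annihilators, a submodule \<open>N\<close> of \<open>M\<close> has the same one
  as \<open>tilde N\<close>; conversely, if \<open>A\<close> is the graded annihilator of a submodule \<open>L\<close> of
  \<open>tilde M\<close>, the elements of \<open>M\<close> killed by \<open>A\<close> form a submodule that contains every
  component of \<open>L\<close>, and therefore has graded annihilator exactly \<open>A\<close>.
\<close>

definition hom_annihilator :: "('r::comm_ring_1, 'm, 'z) fmod_scheme \<Rightarrow> nat \<Rightarrow> 'r set" where
  "hom_annihilator M n = {a. \<forall>m\<in>mcarrier M. msmul M a ((mx M ^^ n) m) = mzero M}"

locale frobenius_module =
  fixes p :: nat and M :: "('r::comm_ring_1, 'm, 'z) fmod_scheme"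
  assumes fmodule: "fmodule p M"
begin

lemma carrier_closed [simp]:
  "mzero M \<in> mcarrier M"
  "a \<in> mcarrier M \<Longrightarrow> b \<in> mcarrier M \<Longrightarrow> madd M a b \<in> mcarrier M"
  "a \<in> mcarrier M \<Longrightarrow> mneg M a \<in> mcarrier M"
  "a \<in> mcarrier M \<Longrightarrow> msmul M r a \<in> mcarrier M"
  "a \<in> mcarrier M \<Longrightarrow> mx M a \<in> mcarrier M"
  using fmodule unfolding fmodule_def by meson+

lemma add_assoc:
  "a \<in> mcarrier M \<Longrightarrow> b \<in> mcarrier M \<Longrightarrow> c \<in> mcarrier M \<Longrightarrow>
   madd M (madd M a b) c = madd M a (madd M b c)"
  using fmodule unfolding fmodule_def by meson

lemma add_commute: "a \<in> mcarrier M \<Longrightarrow> b \<in> mcarrier M \<Longrightarrow> madd M a b = madd M b a"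
  using fmodule unfolding fmodule_def by meson

lemma add_zero_left [simp]: "a \<in> mcarrier M \<Longrightarrow> madd M (mzero M) a = a"
  using fmodule unfolding fmodule_def by meson

lemma add_neg_left [simp]: "a \<in> mcarrier M \<Longrightarrow> madd M (mneg M a) a = mzero M"
  using fmodule unfolding fmodule_def by meson

lemma smul_add:
  "a \<in> mcarrier M \<Longrightarrow> b \<in> mcarrier M \<Longrightarrow> msmul M r (madd M a b) = madd M (msmul M r a) (msmul M r b)"
  using fmodule unfolding fmodule_def by meson

lemma add_smul: "a \<in> mcarrier M \<Longrightarrow> msmul M (r + s) a = madd M (msmul M r a) (msmul M s a)"
  using fmodule unfolding fmodule_def by meson

lemma smul_smul: "a \<in> mcarrier M \<Longrightarrow> msmul M (r * s) a = msmul M r (msmul M s a)"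
  using fmodule unfolding fmodule_def by meson

lemma smul_one [simp]: "a \<in> mcarrier M \<Longrightarrow> msmul M 1 a = a"
  using fmodule unfolding fmodule_def by meson

lemma x_add: "a \<in> mcarrier M \<Longrightarrow> b \<in> mcarrier M \<Longrightarrow> mx M (madd M a b) = madd M (mx M a) (mx M b)"
  using fmodule unfolding fmodule_def by meson

lemma x_smul: "a \<in> mcarrier M \<Longrightarrow> mx M (msmul M r a) = msmul M (r ^ p) (mx M a)"
  using fmodule unfolding fmodule_def by meson

lemma add_zero_right [simp]: "a \<in> mcarrier M \<Longrightarrow> madd M a (mzero M) = a"
  by (metis add_commute add_zero_left carrier_closed(1))

lemma add_neg_right [simp]: "a \<in> mcarrier M \<Longrightarrow> madd M a (mneg M a) = mzero M"
  by (metis add_commute add_neg_left carrier_closed(3))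

lemma minus_add_cancel [simp]:
  "a \<in> mcarrier M \<Longrightarrow> b \<in> mcarrier M \<Longrightarrow> madd M (mneg M a) (madd M a b) = b"
  by (simp add: add_assoc[symmetric])

lemma add_minus_cancel [simp]:
  "a \<in> mcarrier M \<Longrightarrow> b \<in> mcarrier M \<Longrightarrow> madd M a (madd M (mneg M a) b) = b"
  by (simp add: add_assoc[symmetric])

lemma add_add_interchange:
  assumes "a \<in> mcarrier M" "b \<in> mcarrier M" "c \<in> mcarrier M" "d \<in> mcarrier M"
  shows "madd M (madd M a b) (madd M c d) = madd M (madd M a c) (madd M b d)"
proof -
  have "madd M (madd M a b) (madd M c d) = madd M a (madd M (madd M b c) d)"
    using assms by (simp add: add_assoc)
  also have "madd M b c = madd M c b" using assms(2,3) by (rule add_commute)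
  finally show ?thesis using assms by (simp add: add_assoc)
qed

lemma add_left_cancel:
  assumes "a \<in> mcarrier M" "b \<in> mcarrier M" "c \<in> mcarrier M" "madd M a b = madd M a c"
  shows "b = c"
  by (metis assms minus_add_cancel)

lemma add_idem_zero: "a \<in> mcarrier M \<Longrightarrow> madd M a a = a \<Longrightarrow> a = mzero M"
  using add_left_cancel[of a a "mzero M"] by simp

lemma neg_unique:
  "a \<in> mcarrier M \<Longrightarrow> b \<in> mcarrier M \<Longrightarrow> madd M b a = mzero M \<Longrightarrow> b = mneg M a"
  using add_left_cancel[of a b "mneg M a"] by (simp add: add_commute)

lemma neg_zero [simp]: "mneg M (mzero M) = mzero M"
  using neg_unique[of "mzero M" "mzero M"] by simp

lemma smul_zero [simp]: "msmul M r (mzero M) = mzero M"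
  by (rule add_idem_zero) (simp_all add: smul_add[symmetric])

lemma zero_smul [simp]: "a \<in> mcarrier M \<Longrightarrow> msmul M 0 a = mzero M"
  by (rule add_idem_zero) (simp_all add: add_smul[symmetric])

lemma x_zero [simp]: "mx M (mzero M) = mzero M"
  by (rule add_idem_zero) (simp_all add: x_add[symmetric])

lemma x_neg: "a \<in> mcarrier M \<Longrightarrow> mx M (mneg M a) = mneg M (mx M a)"
  by (rule neg_unique) (simp_all add: x_add[symmetric])

lemma smul_neg: "a \<in> mcarrier M \<Longrightarrow> msmul M r (mneg M a) = mneg M (msmul M r a)"
  by (rule neg_unique) (simp_all add: smul_add[symmetric])

lemma smul_left_commute: "a \<in> mcarrier M \<Longrightarrow> msmul M r (msmul M s a) = msmul M s (msmul M r a)"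
  by (metis smul_smul mult.commute)

lemma xpow_closed [simp]: "a \<in> mcarrier M \<Longrightarrow> (mx M ^^ n) a \<in> mcarrier M"
  by (induction n) auto

lemma xpow_zero [simp]: "(mx M ^^ n) (mzero M) = mzero M"
  by (induction n) auto

lemma xpow_add:
  "a \<in> mcarrier M \<Longrightarrow> b \<in> mcarrier M \<Longrightarrow>
   (mx M ^^ n) (madd M a b) = madd M ((mx M ^^ n) a) ((mx M ^^ n) b)"
  by (induction n) (auto simp: x_add)

lemma xpow_neg: "a \<in> mcarrier M \<Longrightarrow> (mx M ^^ n) (mneg M a) = mneg M ((mx M ^^ n) a)"
  by (induction n) (auto simp: x_neg)

lemma xpow_smul: "a \<in> mcarrier M \<Longrightarrow> (mx M ^^ n) (msmul M r a) = msmul M (r ^ p ^ n) ((mx M ^^ n) a)"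
  by (induction n) (auto simp: x_smul power_mult[symmetric] mult.commute)

lemma xpow_eq_zero_mono:
  assumes "(mx M ^^ i) a = mzero M" "i \<le> j"
  shows "(mx M ^^ j) a = mzero M"
proof -
  have "(mx M ^^ j) a = (mx M ^^ (j - i)) ((mx M ^^ i) a)"
    using \<open>i \<le> j\<close> by (metis comp_apply funpow_add le_add_diff_inverse2)
  then show ?thesis using assms(1) by simp
qed

lemma hom_annihilator_Suc: "a \<in> hom_annihilator M n \<Longrightarrow> a \<in> hom_annihilator M (Suc n)"
  unfolding hom_annihilator_def by (simp add: funpow_Suc_right del: funpow.simps)

lemma graded_two_sided_ideal_hom_annihilator: "graded_two_sided_ideal p (hom_annihilator M)"
  unfolding graded_two_sided_ideal_def is_ideal_def
proof (intro conjI allI ballI)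
  fix n a b assume "a \<in> hom_annihilator M n" "b \<in> hom_annihilator M n"
  then show "a + b \<in> hom_annihilator M n" by (simp add: hom_annihilator_def add_smul)
next
  fix n r a assume "a \<in> hom_annihilator M n"
  then show "r * a \<in> hom_annihilator M n" by (simp add: hom_annihilator_def smul_smul)
next
  fix n a assume a: "a \<in> hom_annihilator M n"
  then show "a \<in> hom_annihilator M (Suc n)" by (rule hom_annihilator_Suc)
  show "a ^ p \<in> hom_annihilator M (Suc n)"
    using a by (simp add: hom_annihilator_def x_smul[symmetric])
qed (simp add: hom_annihilator_def)

lemma grann_eq_hom_annihilator: "grann p M = hom_annihilator M"
  unfolding grann_def
proof (rule Greatest_equality)
  show "graded_two_sided_ideal p (hom_annihilator M) \<and> annihilates M (hom_annihilator M)"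
    using graded_two_sided_ideal_hom_annihilator
    by (simp add: annihilates_def hom_annihilator_def)
qed (auto simp: le_fun_def annihilates_def hom_annihilator_def)

end

section \<open>The graded module \<open>tilde M\<close>\<close>

lemma tilde_simps [simp]:
  "mcarrier (tilde M) = {h. (\<forall>n. h n \<in> mcarrier M) \<and> finite {n. h n \<noteq> mzero M}}"
  "madd (tilde M) h g = (\<lambda>n. madd M (h n) (g n))"
  "mzero (tilde M) = (\<lambda>n. mzero M)"
  "mneg (tilde M) h = (\<lambda>n. mneg M (h n))"
  "msmul (tilde M) r h = (\<lambda>n. msmul M r (h n))"
  by (simp_all add: tilde_def)

lemma tilde_mx: "mx (tilde M) h = (\<lambda>n. case n of 0 \<Rightarrow> mzero M | Suc k \<Rightarrow> mx M (h k))"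
  by (simp add: tilde_def)

lemma tilde_restrict:
  "tilde (M\<lparr>mcarrier := N\<rparr>) = (tilde M)\<lparr>mcarrier := {h. (\<forall>n. h n \<in> N) \<and> finite {n. h n \<noteq> mzero M}}\<rparr>"
  by (simp add: tilde_def fun_eq_iff split: nat.split)

lemma fmodule_restrict:
  assumes "fmodule p M" "fsubmodule M N"
  shows "fmodule p (M\<lparr>mcarrier := N\<rparr>)"
proof -
  interpret frobenius_module p M by (rule frobenius_module.intro) (rule assms(1))
  have "\<And>a. a \<in> N \<Longrightarrow> a \<in> mcarrier M" using assms(2) by (auto simp: fsubmodule_def)
  then show ?thesis using assms(2) unfolding fmodule_def fsubmodule_def
    by (auto simp: add_assoc add_smul smul_smul smul_add x_add x_smul intro: add_commute)
qed

lemma fsubmodule_if_fmodule_restrict: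
  "L \<subseteq> mcarrier M \<Longrightarrow> fmodule p (M\<lparr>mcarrier := L\<rparr>) \<Longrightarrow> fsubmodule M L"
  unfolding fmodule_def fsubmodule_def by simp

context frobenius_module
begin

lemma tilde_xpow:
  "(mx (tilde M) ^^ n) h k = (if n \<le> k then (mx M ^^ n) (h (k - n)) else mzero M)"
proof (induction n arbitrary: k)
  case (Suc n)
  then show ?case by (cases k) (auto simp: tilde_mx)
qed simp

lemma fmodule_tilde: "fmodule p (tilde M)"
proof -
  have finite_add: "finite {n. madd M (h n) (g n) \<noteq> mzero M}"
    if "finite {n. h n \<noteq> mzero M}" "finite {n. g n \<noteq> mzero M}" for h g
    by (rule finite_subset[OF _ finite_UnI[OF that]]) auto
  have finite_neg: "finite {n. mneg M (h n) \<noteq> mzero M}"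
    and finite_smul: "finite {n. msmul M r (h n) \<noteq> mzero M}"
    if "finite {n. h n \<noteq> mzero M}" for h r
    by (auto intro: finite_subset[OF _ that])
  have finite_shift: "finite {n. (case n of 0 \<Rightarrow> mzero M | Suc k \<Rightarrow> mx M (h k)) \<noteq> mzero M}"
    if "finite {n. h n \<noteq> mzero M}" for h
  proof (rule finite_subset[OF _ finite_imageI[OF that, of Suc]])
    show "{n. (case n of 0 \<Rightarrow> mzero M | Suc k \<Rightarrow> mx M (h k)) \<noteq> mzero M} \<subseteq> Suc ` {n. h n \<noteq> mzero M}"
    proof
      fix n assume "n \<in> {n. (case n of 0 \<Rightarrow> mzero M | Suc k \<Rightarrow> mx M (h k)) \<noteq> mzero M}"
      then show "n \<in> Suc ` {n. h n \<noteq> mzero M}" by (cases n) auto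
    qed
  qed
  show ?thesis
    unfolding fmodule_def
    by (auto simp: finite_add finite_neg finite_smul finite_shift tilde_mx fun_eq_iff add_assoc
        add_smul smul_smul smul_add x_add x_smul split: nat.split intro: add_commute)
qed

lemma single_in_tilde:
  "m \<in> mcarrier M \<Longrightarrow> (\<lambda>j. if j = i then m else mzero M) \<in> mcarrier (tilde M)"
  by (auto intro: finite_subset[of _ "{i}"])

lemma hom_annihilator_tilde_restrict:
  "a \<in> hom_annihilator ((tilde M)\<lparr>mcarrier := L\<rparr>) n \<longleftrightarrow>
   (\<forall>h\<in>L. \<forall>k. msmul M a ((mx M ^^ n) (h k)) = mzero M)"
proof
  assume "a \<in> hom_annihilator ((tilde M)\<lparr>mcarrier := L\<rparr>) n"
  then have "msmul M a ((mx (tilde M) ^^ n) h (k + n)) = mzero M" if "h \<in> L" for h k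
    using that by (simp add: hom_annihilator_def fun_eq_iff)
  then show "\<forall>h\<in>L. \<forall>k. msmul M a ((mx M ^^ n) (h k)) = mzero M"
    by (simp add: tilde_xpow)
qed (simp add: hom_annihilator_def tilde_xpow fun_eq_iff)

lemma hom_annihilator_tilde: "hom_annihilator (tilde M) = hom_annihilator M"
proof -
  have "(tilde M)\<lparr>mcarrier := mcarrier (tilde M)\<rparr> = tilde M"
    by (simp add: tilde_def)
  note tilde_iff = hom_annihilator_tilde_restrict[of _ "mcarrier (tilde M)", unfolded this]
  show ?thesis
  proof (intro ext set_eqI iffI)
    fix n a
    assume "a \<in> hom_annihilator (tilde M) n"
    then have all: "\<forall>h\<in>mcarrier (tilde M). \<forall>k. msmul M a ((mx M ^^ n) (h k)) = mzero M"
      unfolding tilde_iff .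
    have "msmul M a ((mx M ^^ n) m) = mzero M" if "m \<in> mcarrier M" for m
      using all[rule_format, OF single_in_tilde[OF that, of 0], of 0] by simp
    then show "a \<in> hom_annihilator M n" by (simp add: hom_annihilator_def)
  next
    fix n a
    assume "a \<in> hom_annihilator M n"
    then show "a \<in> hom_annihilator (tilde M) n"
      unfolding tilde_iff by (simp add: hom_annihilator_def)
  qed
qed

lemma fsubmodule_tilde:
  assumes "fsubmodule M N"
  shows "fsubmodule (tilde M) (mcarrier (tilde (M\<lparr>mcarrier := N\<rparr>)))"
proof (rule fsubmodule_if_fmodule_restrict)
  have "fmodule p (tilde (M\<lparr>mcarrier := N\<rparr>))"
    using frobenius_module.fmodule_tilde[OF frobenius_module.intro[OF fmodule_restrict[OF fmodule assms]]] .
  then show "fmodule p ((tilde M)\<lparr>mcarrier := mcarrier (tilde (M\<lparr>mcarrier := N\<rparr>))\<rparr>)"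
    by (simp add: tilde_restrict)
  show "mcarrier (tilde (M\<lparr>mcarrier := N\<rparr>)) \<subseteq> mcarrier (tilde M)"
    using assms by (auto simp: fsubmodule_def)
qed

lemma fsubmodule_annihilated:
  assumes "\<And>a n. a \<in> A n \<Longrightarrow> a \<in> A (Suc n)"
  shows "fsubmodule M {m \<in> mcarrier M. \<forall>n. \<forall>a\<in>A n. msmul M a ((mx M ^^ n) m) = mzero M}"
    (is "fsubmodule M ?N")
  unfolding fsubmodule_def
proof (intro conjI ballI allI)
  fix u v assume "u \<in> ?N" "v \<in> ?N"
  then show "madd M u v \<in> ?N" by (auto simp: xpow_add smul_add)
next
  fix u assume "u \<in> ?N"
  then show "mneg M u \<in> ?N" by (auto simp: xpow_neg smul_neg)
next
  fix r u assume u: "u \<in> ?N"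
  have "msmul M a ((mx M ^^ n) (msmul M r u)) = msmul M (r ^ p ^ n) (msmul M a ((mx M ^^ n) u))"
    for a n using u by (simp add: xpow_smul smul_left_commute[where r = a])
  then have "msmul M a ((mx M ^^ n) (msmul M r u)) = mzero M" if "a \<in> A n" for a n
    using u that by simp
  then show "msmul M r u \<in> ?N" using u by simp
next
  fix u assume u: "u \<in> ?N"
  have "msmul M a ((mx M ^^ n) (mx M u)) = mzero M" if "a \<in> A n" for a n
  proof -
    have "msmul M a ((mx M ^^ Suc n) u) = mzero M" using u assms[OF that] by blast
    then show ?thesis by (simp add: funpow_Suc_right del: funpow.simps)
  qed
  then show "mx M u \<in> ?N" using u by simp
qed auto

section \<open>Graded annihilators of submodules\<close>

lemma grann_restrict_tilde_mem_gann_set: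
  assumes L: "fsubmodule (tilde M) L"
  shows "grann p ((tilde M)\<lparr>mcarrier := L\<rparr>) \<in> gann_set p M"
proof -
  interpret L: frobenius_module p "(tilde M)\<lparr>mcarrier := L\<rparr>"
    by (rule frobenius_module.intro, rule fmodule_restrict[OF fmodule_tilde L])
  define A where "A = hom_annihilator ((tilde M)\<lparr>mcarrier := L\<rparr>)"
  define N where "N = {m \<in> mcarrier M. \<forall>n. \<forall>a\<in>A n. msmul M a ((mx M ^^ n) m) = mzero M}"
  have N: "fsubmodule M N"
    unfolding N_def by (rule fsubmodule_annihilated) (simp add: A_def L.hom_annihilator_Suc)
  have components_in_N: "h k \<in> N" if "h \<in> L" for h k
  proof -
    have "h k \<in> mcarrier M" using that L by (auto simp: fsubmodule_def)
    then show ?thesis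
      using that by (auto simp: N_def A_def hom_annihilator_tilde_restrict)
  qed
  interpret N: frobenius_module p "M\<lparr>mcarrier := N\<rparr>"
    by (rule frobenius_module.intro, rule fmodule_restrict[OF fmodule N])
  have "hom_annihilator (M\<lparr>mcarrier := N\<rparr>) = A"
  proof (intro ext set_eqI iffI)
    fix n a
    assume "a \<in> hom_annihilator (M\<lparr>mcarrier := N\<rparr>) n"
    then have "\<forall>m\<in>N. msmul M a ((mx M ^^ n) m) = mzero M"
      by (simp add: hom_annihilator_def)
    then show "a \<in> A n"
      unfolding A_def hom_annihilator_tilde_restrict using components_in_N by blast
  qed (auto simp: hom_annihilator_def N_def)
  then have "grann p ((tilde M)\<lparr>mcarrier := L\<rparr>) = grann p (M\<lparr>mcarrier := N\<rparr>)"
    by (simp add: A_def L.grann_eq_hom_annihilator N.grann_eq_hom_annihilator)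
  then show ?thesis using N by (auto simp: gann_set_def)
qed

lemma grann_restrict_mem_gann_set_tilde:
  assumes N: "fsubmodule M N"
  shows "grann p (M\<lparr>mcarrier := N\<rparr>) \<in> gann_set p (tilde M)"
proof -
  interpret N: frobenius_module p "M\<lparr>mcarrier := N\<rparr>"
    by (rule frobenius_module.intro, rule fmodule_restrict[OF fmodule N])
  interpret NT: frobenius_module p "tilde (M\<lparr>mcarrier := N\<rparr>)"
    by (rule frobenius_module.intro, rule N.fmodule_tilde)
  have "grann p (M\<lparr>mcarrier := N\<rparr>) = grann p (tilde (M\<lparr>mcarrier := N\<rparr>))"
    by (simp add: N.grann_eq_hom_annihilator NT.grann_eq_hom_annihilator N.hom_annihilator_tilde)
  also have "\<dots> = grann p ((tilde M)\<lparr>mcarrier := mcarrier (tilde (M\<lparr>mcarrier := N\<rparr>))\<rparr>)"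
    by (simp add: tilde_restrict)
  finally show ?thesis
    using fsubmodule_tilde[OF N] by (auto simp: gann_set_def)
qed

lemma gann_set_tilde: "gann_set p (tilde M) = gann_set p M"
  using grann_restrict_tilde_mem_gann_set grann_restrict_mem_gann_set_tilde
  by (auto simp: gann_set_def)

section \<open>\<open>x\<close>-torsion\<close>

lemma fsubmodule_Gamma_x: "fsubmodule M (Gamma_x M)"
  unfolding fsubmodule_def
proof (intro conjI ballI allI)
  fix a b assume "a \<in> Gamma_x M" "b \<in> Gamma_x M"
  then obtain i j where a: "a \<in> mcarrier M" "(mx M ^^ i) a = mzero M"
    and b: "b \<in> mcarrier M" "(mx M ^^ j) b = mzero M"
    by (auto simp: Gamma_x_def)
  have "(mx M ^^ (i + j)) a = mzero M" "(mx M ^^ (i + j)) b = mzero M"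
    using xpow_eq_zero_mono[OF a(2)] xpow_eq_zero_mono[OF b(2)] by auto
  then have "(mx M ^^ (i + j)) (madd M a b) = mzero M"
    using a b by (simp add: xpow_add)
  then show "madd M a b \<in> Gamma_x M"
    using a b carrier_closed(2) unfolding Gamma_x_def by blast
next
  fix a assume "a \<in> Gamma_x M"
  then obtain j where a: "a \<in> mcarrier M" "(mx M ^^ j) a = mzero M" by (auto simp: Gamma_x_def)
  then have "(mx M ^^ j) (mneg M a) = mzero M" by (simp add: xpow_neg)
  then show "mneg M a \<in> Gamma_x M" using a carrier_closed(3) unfolding Gamma_x_def by blast
next
  fix r a assume "a \<in> Gamma_x M"
  then obtain j where a: "a \<in> mcarrier M" "(mx M ^^ j) a = mzero M" by (auto simp: Gamma_x_def)
  then have "(mx M ^^ j) (msmul M r a) = mzero M" by (simp add: xpow_smul)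
  then show "msmul M r a \<in> Gamma_x M" using a carrier_closed(4) unfolding Gamma_x_def by blast
next
  fix a assume "a \<in> Gamma_x M"
  then obtain j where a: "a \<in> mcarrier M" "(mx M ^^ j) a = mzero M" by (auto simp: Gamma_x_def)
  then have "(mx M ^^ j) (mx M a) = mzero M"
    by (simp add: funpow_swap1[symmetric])
  then show "mx M a \<in> Gamma_x M" using a carrier_closed(5) unfolding Gamma_x_def by blast
qed (auto simp: Gamma_x_def)

lemma Gamma_x_common_exponent:
  "finite S \<Longrightarrow> S \<subseteq> Gamma_x M \<Longrightarrow> \<exists>j. \<forall>m\<in>S. (mx M ^^ j) m = mzero M"
proof (induction S rule: finite_induct)
  case (insert m S)
  then obtain i j where "\<forall>m\<in>S. (mx M ^^ i) m = mzero M" "(mx M ^^ j) m = mzero M"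
    by (auto simp: Gamma_x_def)
  then have "\<forall>m'\<in>insert m S. (mx M ^^ (i + j)) m' = mzero M"
    by (auto intro: xpow_eq_zero_mono)
  then show ?case ..
qed simp

lemma Gamma_x_tilde: "Gamma_x (tilde M) = mcarrier (tilde (M\<lparr>mcarrier := Gamma_x M\<rparr>))"
proof (intro set_eqI iffI)
  fix h assume "h \<in> Gamma_x (tilde M)"
  then obtain j where h: "h \<in> mcarrier (tilde M)" "(mx (tilde M) ^^ j) h = mzero (tilde M)"
    unfolding Gamma_x_def by blast
  have "(mx M ^^ j) (h n) = mzero M" for n
    using fun_cong[OF h(2), of "n + j"] by (simp add: tilde_xpow)
  then show "h \<in> mcarrier (tilde (M\<lparr>mcarrier := Gamma_x M\<rparr>))"
    using h(1) by (auto simp: Gamma_x_def)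
next
  fix h assume "h \<in> mcarrier (tilde (M\<lparr>mcarrier := Gamma_x M\<rparr>))"
  then have h: "\<forall>n. h n \<in> Gamma_x M" "finite {n. h n \<noteq> mzero M}" by simp_all
  then obtain j where j: "\<forall>m\<in>h ` {n. h n \<noteq> mzero M}. (mx M ^^ j) m = mzero M"
    using Gamma_x_common_exponent[of "h ` {n. h n \<noteq> mzero M}"] by blast
  have "(mx M ^^ j) (h n) = mzero M" for n
    using j by (cases "h n = mzero M") auto
  then have "(mx (tilde M) ^^ j) h = mzero (tilde M)"
    by (simp add: tilde_xpow fun_eq_iff)
  moreover have "h \<in> mcarrier (tilde M)" using h by (auto simp: Gamma_x_def)
  ultimately show "h \<in> Gamma_x (tilde M)" unfolding Gamma_x_def by blast
qed

lemma Gamma_x_tilde_killed_iff: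
  "(\<forall>h\<in>Gamma_x (tilde M). (mx (tilde M) ^^ e) h = mzero (tilde M)) \<longleftrightarrow>
   (\<forall>m\<in>Gamma_x M. (mx M ^^ e) m = mzero M)"
proof
  assume tilde_killed: "\<forall>h\<in>Gamma_x (tilde M). (mx (tilde M) ^^ e) h = mzero (tilde M)"
  show "\<forall>m\<in>Gamma_x M. (mx M ^^ e) m = mzero M"
  proof
    fix m assume m: "m \<in> Gamma_x M"
    have "(\<lambda>j. if j = 0 then m else mzero M) \<in> Gamma_x (tilde M)"
      using m fsubmodule_Gamma_x unfolding Gamma_x_tilde
      by (auto simp: fsubmodule_def intro: finite_subset[of _ "{0}"])
    then have "(mx (tilde M) ^^ e) (\<lambda>j. if j = 0 then m else mzero M) e = mzero M"
      using tilde_killed by simp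
    then show "(mx M ^^ e) m = mzero M" by (simp add: tilde_xpow)
  qed
qed (auto simp: Gamma_x_tilde tilde_xpow fun_eq_iff)

lemma HSL_tilde: "HSL (tilde M) = HSL M"
  unfolding HSL_def Gamma_x_tilde_killed_iff ..

end

section \<open>Quotients\<close>

lemma quot_carrier: "mcarrier (quot M N) = coset M N ` mcarrier M"
  by (simp add: quot_def)

lemma quot_zero [simp]: "mzero (quot M N) = N"
  by (simp add: quot_def)

locale frobenius_submodule = frobenius_module +
  fixes N
  assumes fsubmodule: "fsubmodule M N"
begin

lemma submodule_closed [simp]:
  "mzero M \<in> N"
  "a \<in> N \<Longrightarrow> b \<in> N \<Longrightarrow> madd M a b \<in> N"
  "a \<in> N \<Longrightarrow> mneg M a \<in> N"
  "a \<in> N \<Longrightarrow> msmul M r a \<in> N"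
  "a \<in> N \<Longrightarrow> mx M a \<in> N"
  using fsubmodule unfolding fsubmodule_def by blast+

lemma submodule_in_carrier: "a \<in> N \<Longrightarrow> a \<in> mcarrier M"
  using fsubmodule unfolding fsubmodule_def by blast

lemma coset_add:
  assumes a: "a \<in> mcarrier M" and n: "n \<in> N"
  shows "coset M N (madd M a n) = coset M N a"
proof (intro set_eqI iffI)
  fix x assume "x \<in> coset M N (madd M a n)"
  then obtain n' where n': "n' \<in> N" "x = madd M (madd M a n) n'" by (auto simp: coset_def)
  then have "x = madd M a (madd M n n')" using a n by (simp add: add_assoc submodule_in_carrier)
  then show "x \<in> coset M N a" using n n' by (auto simp: coset_def)
next
  fix x assume "x \<in> coset M N a"
  then obtain n' where n': "n' \<in> N" "x = madd M a n'" by (auto simp: coset_def)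
  have "x = madd M (madd M a n) (madd M (mneg M n) n')"
    using a n n' by (simp add: add_assoc submodule_in_carrier)
  then show "x \<in> coset M N (madd M a n)" using n n' by (auto simp: coset_def)
qed

lemma coset_self: "a \<in> mcarrier M \<Longrightarrow> a \<in> coset M N a"
  unfolding coset_def by (rule CollectI, rule exI[of _ "mzero M"]) simp

lemma coset_zero: "coset M N (mzero M) = N"
proof (intro set_eqI iffI)
  fix x assume "x \<in> coset M N (mzero M)"
  then show "x \<in> N" by (auto simp: coset_def submodule_in_carrier)
next
  fix x assume x: "x \<in> N"
  then have "x = madd M (mzero M) x" by (simp add: submodule_in_carrier)
  then show "x \<in> coset M N (mzero M)" unfolding coset_def using x by blast
qed

lemma coset_eq_iff:
  assumes a: "a \<in> mcarrier M" and b: "b \<in> mcarrier M"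
  shows "coset M N a = coset M N b \<longleftrightarrow> madd M (mneg M b) a \<in> N"
proof
  assume "coset M N a = coset M N b"
  then obtain n where n: "n \<in> N" "a = madd M b n"
    using coset_self[OF a] by (auto simp: coset_def)
  then show "madd M (mneg M b) a \<in> N" using b by (simp add: submodule_in_carrier)
next
  assume "madd M (mneg M b) a \<in> N"
  then have "coset M N (madd M b (madd M (mneg M b) a)) = coset M N b"
    using b by (rule coset_add[rotated])
  then show "coset M N a = coset M N b" using a b by simp
qed

lemma quot_add_coset:
  assumes a: "a \<in> mcarrier M" and b: "b \<in> mcarrier M"
  shows "madd (quot M N) (coset M N a) (coset M N b) = coset M N (madd M a b)"
proof (intro set_eqI iffI)
  fix x assume "x \<in> madd (quot M N) (coset M N a) (coset M N b)"
  then obtain n1 n2 where n: "n1 \<in> N" "n2 \<in> N" "x = madd M (madd M a n1) (madd M b n2)"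
    by (auto simp: quot_def coset_def)
  then have "x = madd M (madd M a b) (madd M n1 n2)"
    using a b add_add_interchange[of a n1 b n2] by (simp add: submodule_in_carrier)
  then show "x \<in> coset M N (madd M a b)" using n by (auto simp: coset_def)
next
  fix x assume "x \<in> coset M N (madd M a b)"
  then obtain n where n: "n \<in> N" "x = madd M (madd M a b) n" by (auto simp: coset_def)
  then have "x = madd M (madd M a n) (madd M b (mzero M))"
    using a b add_add_interchange[of a b n "mzero M"] by (simp add: submodule_in_carrier)
  then show "x \<in> madd (quot M N) (coset M N a) (coset M N b)"
    unfolding quot_def coset_def fmod.select_convs using n(1) submodule_closed(1) by blast
qed

lemma UN_coset_map_eq:
  assumes a: "a \<in> mcarrier M"
    and f_add: "\<And>x n. x \<in> mcarrier M \<Longrightarrow> n \<in> N \<Longrightarrow> f (madd M x n) = madd M (f x) (f n)"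
    and f_closed: "\<And>x. x \<in> mcarrier M \<Longrightarrow> f x \<in> mcarrier M"
    and f_N: "\<And>n. n \<in> N \<Longrightarrow> f n \<in> N"
  shows "(\<Union>x\<in>coset M N a. coset M N (f x)) = coset M N (f a)"
proof -
  have "coset M N (f x) = coset M N (f a)" if "x \<in> coset M N a" for x
  proof -
    obtain n where n: "n \<in> N" "x = madd M a n"
      using \<open>x \<in> coset M N a\<close> by (auto simp: coset_def)
    then have "coset M N (f x) = coset M N (madd M (f a) (f n))"
      using a by (simp add: f_add)
    also have "\<dots> = coset M N (f a)"
      using a n(1) by (intro coset_add f_closed f_N)
    finally show ?thesis .
  qed
  then have "(\<Union>x\<in>coset M N a. coset M N (f x)) = (\<Union>x\<in>coset M N a. coset M N (f a))"
    by (rule SUP_cong[OF refl])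
  then show ?thesis using coset_self[OF a] by auto
qed

lemma quot_smul_coset:
  "a \<in> mcarrier M \<Longrightarrow> msmul (quot M N) r (coset M N a) = coset M N (msmul M r a)"
  unfolding quot_def fmod.select_convs
  by (rule UN_coset_map_eq) (simp_all add: smul_add submodule_in_carrier)

lemma quot_x_coset:
  "a \<in> mcarrier M \<Longrightarrow> mx (quot M N) (coset M N a) = coset M N (mx M a)"
  unfolding quot_def fmod.select_convs
  by (rule UN_coset_map_eq) (simp_all add: x_add submodule_in_carrier)

end

definition coset_components :: "(nat \<Rightarrow> 'm) set \<Rightarrow> nat \<Rightarrow> 'm set" where
  "coset_components A n = (\<lambda>h. h n) ` A"

context frobenius_submodule
begin

\<comment> \<open>the carrier of \<open>tilde (M\<lparr>mcarrier := N\<rparr>)\<close>, in the form the simplifier produces\<close>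
abbreviation tilde_submodule where
  "tilde_submodule \<equiv> {h. (\<forall>n. h n \<in> N) \<and> finite {n. h n \<noteq> mzero M}}"

lemma frobenius_submodule_tilde: "frobenius_submodule p (tilde M) tilde_submodule"
  using fsubmodule_tilde[OF fsubmodule]
  by (simp add: frobenius_submodule_def frobenius_submodule_axioms_def frobenius_module_def fmodule_tilde)

lemma coset_components_coset:
  assumes h: "h \<in> mcarrier (tilde M)"
  shows "coset_components (coset (tilde M) tilde_submodule h) = (\<lambda>n. coset M N (h n))"
proof (intro ext set_eqI iffI)
  fix n x assume "x \<in> coset_components (coset (tilde M) tilde_submodule h) n"
  then show "x \<in> coset M N (h n)"
    by (auto simp: coset_components_def coset_def)
next
  fix n x assume "x \<in> coset M N (h n)"
  then obtain c where c: "c \<in> N" "x = madd M (h n) c" by (auto simp: coset_def)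
  define g where "g = (\<lambda>k. if k = n then c else mzero M)"
  have "g \<in> tilde_submodule"
    using c(1) by (auto simp: g_def intro: finite_subset[of _ "{n}"])
  moreover have "x = madd (tilde M) h g n" using c by (simp add: g_def)
  ultimately show "x \<in> coset_components (coset (tilde M) tilde_submodule h) n"
    unfolding coset_components_def coset_def by blast
qed

lemma inj_on_coset_components:
  "inj_on coset_components (mcarrier (quot (tilde M) tilde_submodule))"
proof (rule inj_onI)
  interpret T: frobenius_submodule p "tilde M" tilde_submodule
    by (rule frobenius_submodule_tilde)
  fix A B
  assume "A \<in> mcarrier (quot (tilde M) tilde_submodule)" "B \<in> mcarrier (quot (tilde M) tilde_submodule)"
    and AB: "coset_components A = coset_components B"
  then obtain h g where h: "h \<in> mcarrier (tilde M)" "A = coset (tilde M) tilde_submodule h"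
    and g: "g \<in> mcarrier (tilde M)" "B = coset (tilde M) tilde_submodule g"
    unfolding quot_carrier by blast
  have "coset M N (h n) = coset M N (g n)" for n
    using AB fun_cong[OF coset_components_coset[OF h(1)], of n]
      fun_cong[OF coset_components_coset[OF g(1)], of n] h(2) g(2) by simp
  then have "madd M (mneg M (g n)) (h n) \<in> N" for n
    using coset_eq_iff h(1) g(1) by simp
  moreover have "madd (tilde M) (mneg (tilde M) g) h \<in> mcarrier (tilde M)"
    using g(1) h(1) by (intro T.carrier_closed)
  ultimately have "madd (tilde M) (mneg (tilde M) g) h \<in> tilde_submodule" by simp
  then show "A = B"
    using T.coset_eq_iff[OF h(1) g(1)] h(2) g(2) by simp
qed

lemma coset_components_image:
  "coset_components ` mcarrier (quot (tilde M) tilde_submodule) = mcarrier (tilde (quot M N))"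
proof (intro set_eqI iffI)
  fix F assume "F \<in> coset_components ` mcarrier (quot (tilde M) tilde_submodule)"
  then obtain h where h: "h \<in> mcarrier (tilde M)"
    and "F = coset_components (coset (tilde M) tilde_submodule h)"
    unfolding quot_carrier by blast
  then have F: "F = (\<lambda>n. coset M N (h n))" by (simp add: coset_components_coset)
  have "{n. coset M N (h n) \<noteq> N} \<subseteq> {n. h n \<noteq> mzero M}"
    by (rule Collect_mono) (auto simp: coset_zero)
  then have "finite {n. coset M N (h n) \<noteq> N}"
    using h by (simp add: finite_subset)
  then show "F \<in> mcarrier (tilde (quot M N))"
    using h by (simp add: F quot_carrier)
next
  fix F assume "F \<in> mcarrier (tilde (quot M N))"
  then have F: "\<And>n. F n \<in> coset M N ` mcarrier M" "finite {n. F n \<noteq> N}"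
    by (simp_all add: quot_carrier)
  \<comment> \<open>the zero coset gets the representative zero, so that \<open>c\<close> has finite support\<close>
  define c where "c n = (if F n = N then mzero M else (SOME x. x \<in> mcarrier M \<and> F n = coset M N x))" for n
  have c: "c n \<in> mcarrier M \<and> F n = coset M N (c n)" for n
  proof (cases "F n = N")
    case False
    have "\<exists>x. x \<in> mcarrier M \<and> F n = coset M N x" using F(1)[of n] by auto
    from someI_ex[OF this] show ?thesis using False unfolding c_def by simp
  qed (simp add: c_def coset_zero)
  have "{n. c n \<noteq> mzero M} \<subseteq> {n. F n \<noteq> N}" by (rule Collect_mono) (simp add: c_def)
  then have c_tilde: "c \<in> mcarrier (tilde M)"
    using c F(2) by (simp add: finite_subset)
  then have "F = coset_components (coset (tilde M) tilde_submodule c)"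
    using c by (simp add: coset_components_coset fun_eq_iff)
  then show "F \<in> coset_components ` mcarrier (quot (tilde M) tilde_submodule)"
    using c_tilde unfolding quot_carrier by blast
qed

lemma quot_tilde_iso: "fmod_iso (quot (tilde M) tilde_submodule) (tilde (quot M N)) coset_components"
  unfolding fmod_iso_def
proof (intro conjI ballI allI)
  interpret T: frobenius_submodule p "tilde M" tilde_submodule
    by (rule frobenius_submodule_tilde)
  show "bij_betw coset_components (mcarrier (quot (tilde M) tilde_submodule)) (mcarrier (tilde (quot M N)))"
    unfolding bij_betw_def using inj_on_coset_components coset_components_image by blast
  fix A assume "A \<in> mcarrier (quot (tilde M) tilde_submodule)"
  then obtain h where h: "h \<in> mcarrier (tilde M)" "A = coset (tilde M) tilde_submodule h"
    unfolding quot_carrier by blast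
  then have hn: "h n \<in> mcarrier M" for n by simp
  show "coset_components (msmul (quot (tilde M) tilde_submodule) r A)
        = msmul (tilde (quot M N)) r (coset_components A)" for r
    using h T.carrier_closed(4)[OF h(1), of r]
    by (simp add: T.quot_smul_coset coset_components_coset quot_smul_coset hn)
  have "coset_components (mx (quot (tilde M) tilde_submodule) A) = (\<lambda>n. coset M N (mx (tilde M) h n))"
    using h T.carrier_closed(5)[OF h(1)] by (simp add: T.quot_x_coset coset_components_coset)
  also have "\<dots> = mx (tilde (quot M N)) (coset_components A)"
    using h by (simp add: coset_components_coset tilde_mx quot_x_coset hn coset_zero fun_eq_iff
        split: nat.split)
  finally show "coset_components (mx (quot (tilde M) tilde_submodule) A)
    = mx (tilde (quot M N)) (coset_components A)" .
  fix B assume "B \<in> mcarrier (quot (tilde M) tilde_submodule)"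
  then obtain g where g: "g \<in> mcarrier (tilde M)" "B = coset (tilde M) tilde_submodule g"
    unfolding quot_carrier by blast
  then have gn: "g n \<in> mcarrier M" for n by simp
  show "coset_components (madd (quot (tilde M) tilde_submodule) A B)
        = madd (tilde (quot M N)) (coset_components A) (coset_components B)"
    using h g T.carrier_closed(2)[OF h(1) g(1)]
    by (simp add: T.quot_add_coset coset_components_coset quot_add_coset hn gn)
qed

end

theorem lemma2p5:
  fixes p :: nat
    and H :: "('r::comm_ring_1, 'm) fmod"
  assumes "prime p"
    and "CHAR('r) = p"
    and "noetherian_ring TYPE('r)"
    and "fmodule p H"
  shows "gann_set p (tilde H) = gann_set p H
         \<and> (HSL (tilde H) = HSL H
              \<and> Gamma_x (tilde H) = mcarrier (tilde (H\<lparr>mcarrier := Gamma_x H\<rparr>)))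
         \<and> (\<exists>\<phi>. fmod_iso (quot (tilde H) (Gamma_x (tilde H)))
                    (tilde (quot H (Gamma_x H))) \<phi>)"
proof -
  \<comment> \<open>only \<open>fmodule p H\<close> is needed; the hypotheses on \<open>p\<close> and the ring are not\<close>
  interpret frobenius_module p H
    by (rule frobenius_module.intro) (rule assms(4))
  interpret Gamma: frobenius_submodule p H "Gamma_x H"
    by (intro frobenius_submodule.intro frobenius_submodule_axioms.intro
        frobenius_module_axioms fsubmodule_Gamma_x)
  have Gamma_tilde: "Gamma_x (tilde H) = Gamma.tilde_submodule"
    by (simp add: Gamma_x_tilde)
  have "fmod_iso (quot (tilde H) (Gamma_x (tilde H))) (tilde (quot H (Gamma_x H))) coset_components"
    unfolding Gamma_tilde by (rule Gamma.quot_tilde_iso)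
  then show ?thesis
    using gann_set_tilde HSL_tilde Gamma_x_tilde by blast
qed

end
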